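(* The useless arc rule is correct: if $\mathcal N_2$ is obtained from a negotiation $\mathcal N_1$ by one application of the useless arc rule, then $\mathcal N_1\equiv\mathcal N_2$.
   Context: Fix a finite nonempty set $A$ of agents; each $a\in A$ has a nonempty set $Q_a$ of internal states, $Q_A=\prod_{a\in A}Q_a$. A transformer is a left-total relation $\tau\subseteq Q_A\times Q_A$; for $S\subseteq A$ an $S$-transformer is a transformer with $(q,q')\in\tau\Rightarrow q_a=q'_a$ for all $a\notin S$. An atom is $n=(P_n,R_n,\delta_n)$: $P_n\subseteq A$ nonempty (parties), $R_n$ finite nonempty (outcomes), $\delta_n$ assigns to each $r\in R_n$ a $P_n$-transformer, written $\langle n,r\rangle$. A negotiation is $\mathcal N=(N,n_0,n_f,\mathcal X)$ with $N$ a finite set of atoms, $n_0,n_f\in N$ (possibly equal), $T(N)=\{(n,a,r): n\in N,a\in P_n,r\in R_n\}$, $\mathcal X:T(N)\to 2^N$, such that every agent is a party of $n_0$ and of $n_f$, and $\mathcal X(n,a,r)=\emptyset$ iff $n=n_f$. A marking is $x:A\to 2^N$; initial $x_0(a)=\{n_0\}$, final $x_f(a)=\emptyset$. $x$ enables $n$ if $n\in x(a)$ for all $a\in P_n$; then for $r\in R_n$ the step $(n,r)$ leads to $x'$ with $x'(a)=\mathcal X(n,a,r)$ for $a\in P_n$ and $x'(a)=x(a)$ otherwise. A large step is a finite occurrence sequence from $x_0$ to $x_f$. $\mathcal N$ is sound if every atom is enabled at some reachable marking and every occurrence sequence from $x_0$ is a large step or can be extended to one. For $r\in R_{n_f}$,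 the summary transformer is $\langle\mathcal N,r\rangle=\bigcup_\sigma \langle n_1,r_1\rangle\cdots\langle n_k,r_k\rangle$, the union over all large steps $\sigma=(n_1,r_1)\cdots(n_k,r_k)$ ending with $(n_f,r)$, with juxtaposition being relational composition. Two negotiations over the same agents are equivalent, $\mathcal N_1\equiv\mathcal N_2$, if either both are unsound, or both are sound, have the same set of final outcomes $R_{n_f}$, and $\langle\mathcal N_1,r\rangle=\langle\mathcal N_2,r\rangle$ for every final outcome $r$. Useless arc rule. Guard: there are $(n,a,r),(n,b,r)\in T(N)$ and two distinct atoms $n',n''\in N$ such that $a,b\in P_{n'}\cap P_{n''}$, $n',n''\in\mathcal X(n,a,r)$ and $\mathcal X(n,b,r)=\{n'\}$. Action: replace $\mathcal X(n,a,r)$ by $\mathcal X(n,a,r)\setminus\{n''\}$ (everything else unchanged). *)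

theory Defs
  imports "HOL-Library.FuncSet"
begin

(* Agents: a finite nonempty set A :: 'a set; internal states Q a :: 'q set.
   Global states Q_A = Pi_E A Q (extensional functions). *)

type_synonym ('a,'q) gstate = "'a \<Rightarrow> 'q"
type_synonym ('a,'q) transformer = "(('a,'q) gstate \<times> ('a,'q) gstate) set"

definition is_transformer :: "'a set \<Rightarrow> ('a \<Rightarrow> 'q set) \<Rightarrow> ('a,'q) transformer \<Rightarrow> bool" where
  "is_transformer A Q \<tau> \<longleftrightarrow>
     \<tau> \<subseteq> (PiE A Q) \<times> (PiE A Q) \<and> (\<forall>q\<in>PiE A Q. \<exists>q'. (q, q') \<in> \<tau>)"

definition S_transformer :: "'a set \<Rightarrow> ('a \<Rightarrow> 'q set) \<Rightarrow> 'a set \<Rightarrow> ('a,'q) transformer \<Rightarrow> bool" where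
  "S_transformer A Q S \<tau> \<longleftrightarrow>
     is_transformer A Q \<tau> \<and> (\<forall>(q, q')\<in>\<tau>. \<forall>a\<in>A - S. q a = q' a)"

record ('a,'q,'n,'r) negotiation =
  atoms   :: "'n set"
  init    :: "'n"
  fin     :: "'n"
  parties :: "'n \<Rightarrow> 'a set"
  outs    :: "'n \<Rightarrow> 'r set"
  delta   :: "'n \<Rightarrow> 'r \<Rightarrow> ('a,'q) transformer"
  arcs    :: "'n \<Rightarrow> 'a \<Rightarrow> 'r \<Rightarrow> 'n set"

definition is_negotiation :: "'a set \<Rightarrow> ('a \<Rightarrow> 'q set) \<Rightarrow> ('a,'q,'n,'r) negotiation \<Rightarrow> bool" where
  "is_negotiation A Q \<N> \<longleftrightarrow>
     finite A \<and> A \<noteq> {} \<and> (\<forall>a\<in>A. Q a \<noteq> {}) \<and>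
     finite (atoms \<N>) \<and> init \<N> \<in> atoms \<N> \<and> fin \<N> \<in> atoms \<N> \<and>
     (\<forall>n\<in>atoms \<N>. parties \<N> n \<subseteq> A \<and> parties \<N> n \<noteq> {} \<and>
        finite (outs \<N> n) \<and> outs \<N> n \<noteq> {} \<and>
        (\<forall>r\<in>outs \<N> n. S_transformer A Q (parties \<N> n) (delta \<N> n r))) \<and>
     parties \<N> (init \<N>) = A \<and> parties \<N> (fin \<N>) = A \<and>
     (\<forall>n\<in>atoms \<N>. \<forall>a\<in>parties \<N> n. \<forall>r\<in>outs \<N> n.
        arcs \<N> n a r \<subseteq> atoms \<N> \<and> (arcs \<N> n a r = {} \<longleftrightarrow> n = fin \<N>))"

type_synonym ('a,'n) marking = "'a \<Rightarrow> 'n set"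

definition init_marking :: "'a set \<Rightarrow> ('a,'q,'n,'r) negotiation \<Rightarrow> ('a,'n) marking" where
  "init_marking A \<N> = (\<lambda>a. if a \<in> A then {init \<N>} else {})"

definition final_marking :: "('a,'n) marking" where
  "final_marking = (\<lambda>a. {})"

definition enabled :: "('a,'q,'n,'r) negotiation \<Rightarrow> ('a,'n) marking \<Rightarrow> 'n \<Rightarrow> bool" where
  "enabled \<N> x n \<longleftrightarrow> n \<in> atoms \<N> \<and> (\<forall>a\<in>parties \<N> n. n \<in> x a)"

fun exec :: "('a,'q,'n,'r) negotiation \<Rightarrow> ('a,'n) marking \<Rightarrow> ('n \<times> 'r) list \<Rightarrow> ('a,'n) marking option" where
  "exec \<N> x [] = Some x"
| "exec \<N> x ((n, r) # \<sigma>) =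
     (if enabled \<N> x n \<and> r \<in> outs \<N> n
      then exec \<N> (\<lambda>a. if a \<in> parties \<N> n then arcs \<N> n a r else x a) \<sigma>
      else None)"

definition large_step :: "'a set \<Rightarrow> ('a,'q,'n,'r) negotiation \<Rightarrow> ('n \<times> 'r) list \<Rightarrow> bool" where
  "large_step A \<N> \<sigma> \<longleftrightarrow> exec \<N> (init_marking A \<N>) \<sigma> = Some final_marking"

definition reachable :: "'a set \<Rightarrow> ('a,'q,'n,'r) negotiation \<Rightarrow> ('a,'n) marking \<Rightarrow> bool" where
  "reachable A \<N> x \<longleftrightarrow> (\<exists>\<sigma>. exec \<N> (init_marking A \<N>) \<sigma> = Some x)"

definition sound :: "'a set \<Rightarrow> ('a,'q,'n,'r) negotiation \<Rightarrow> bool" where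
  "sound A \<N> \<longleftrightarrow>
     (\<forall>n\<in>atoms \<N>. \<exists>x. reachable A \<N> x \<and> enabled \<N> x n) \<and>
     (\<forall>\<sigma> x. exec \<N> (init_marking A \<N>) \<sigma> = Some x \<longrightarrow>
        (\<exists>\<sigma>'. large_step A \<N> (\<sigma> @ \<sigma>')))"

definition seq_transformer :: "('a,'q,'n,'r) negotiation \<Rightarrow> ('n \<times> 'r) list \<Rightarrow> ('a,'q) transformer" where
  "seq_transformer \<N> \<sigma> = foldr (\<lambda>(n, r) acc. delta \<N> n r O acc) \<sigma> Id"

definition summary :: "'a set \<Rightarrow> ('a,'q,'n,'r) negotiation \<Rightarrow> 'r \<Rightarrow> ('a,'q) transformer" where
  "summary A \<N> r =
     (\<Union>\<sigma>\<in>{\<sigma>. large_step A \<N> \<sigma> \<and> \<sigma> \<noteq> [] \<and> last \<sigma> = (fin \<N>, r)}. seq_transformer \<N> \<sigma>)"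

definition neg_equiv :: "'a set \<Rightarrow> ('a,'q,'n,'r) negotiation \<Rightarrow> ('a,'q,'n,'r) negotiation \<Rightarrow> bool" where
  "neg_equiv A \<N>1 \<N>2 \<longleftrightarrow>
     (\<not> sound A \<N>1 \<and> \<not> sound A \<N>2) \<or>
     (sound A \<N>1 \<and> sound A \<N>2 \<and> outs \<N>1 (fin \<N>1) = outs \<N>2 (fin \<N>2) \<and>
      (\<forall>r\<in>outs \<N>1 (fin \<N>1). summary A \<N>1 r = summary A \<N>2 r))"

definition useless_arc_step :: "('a,'q,'n,'r) negotiation \<Rightarrow> ('a,'q,'n,'r) negotiation \<Rightarrow> bool" where
  "useless_arc_step \<N>1 \<N>2 \<longleftrightarrow>
     (\<exists>n a b r n' n''.
        n \<in> atoms \<N>1 \<and> r \<in> outs \<N>1 n \<and> a \<in> parties \<N>1 n \<and> b \<in> parties \<N>1 n \<and>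
        n' \<in> atoms \<N>1 \<and> n'' \<in> atoms \<N>1 \<and> n' \<noteq> n'' \<and>
        a \<in> parties \<N>1 n' \<inter> parties \<N>1 n'' \<and> b \<in> parties \<N>1 n' \<inter> parties \<N>1 n'' \<and>
        n' \<in> arcs \<N>1 n a r \<and> n'' \<in> arcs \<N>1 n a r \<and> arcs \<N>1 n b r = {n'} \<and>
        \<N>2 = \<N>1\<lparr>arcs := (\<lambda>m c s. if (m, c, s) = (n, a, r)
                                  then arcs \<N>1 n a r - {n''} else arcs \<N>1 m c s)\<rparr>)"

end

theory Submission
  imports Defs
begin

text \<open>Dropping the arc from \<open>(n, a, r)\<close> to \<open>n''\<close> only matters after the step \<open>(n, r)\<close>:
  afterwards agent \<open>a\<close> carries one more token, on \<open>n''\<close>, in the original negotiation, while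
  \<open>b\<close> sits on \<open>n'\<close> alone. That token is dead: \<open>n''\<close> needs \<open>b\<close>, which waits on \<open>n' \<noteq> n''\<close>,
  and \<open>b\<close> cannot leave \<open>n'\<close> without \<open>a\<close>, a party of \<open>n'\<close>; as soon as \<open>a\<close> moves, the two markings
  coincide again. So both negotiations admit the same occurrence sequences with markings related
  in this way, and since the extra token is never part of the (empty) final marking, they have the
  same large steps and the same soundness status; their transformers being the same, so are their
  summaries.\<close>

definition fire :: "('a,'q,'n,'r) negotiation \<Rightarrow> ('a,'n) marking \<Rightarrow> 'n \<Rightarrow> 'r \<Rightarrow> ('a,'n) marking" where
  "fire \<N> x n r = (\<lambda>c. if c \<in> parties \<N> n then arcs \<N> n c r else x c)"

lemma exec_Cons_fire:
  "exec \<N> x ((n, r) # \<sigma>) = (if enabled \<N> x n \<and> r \<in> outs \<N> n then exec \<N> (fire \<N> x n r) \<sigma> else None)"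
  by (simp add: fire_def)

locale marking_bisimulation =
  fixes A :: "'a set" and \<N>1 \<N>2 :: "('a,'q,'n,'r) negotiation"
    and R :: "('a,'n) marking \<Rightarrow> ('a,'n) marking \<Rightarrow> bool"
  assumes atoms_eq: "atoms \<N>2 = atoms \<N>1"
    and outs_eq: "outs \<N>2 = outs \<N>1"
    and init_rel: "R (init_marking A \<N>1) (init_marking A \<N>2)"
    and enabled_rel: "R x1 x2 \<Longrightarrow> enabled \<N>2 x2 m \<longleftrightarrow> enabled \<N>1 x1 m"
    and fire_rel: "R x1 x2 \<Longrightarrow> enabled \<N>1 x1 m \<Longrightarrow> R (fire \<N>1 x1 m s) (fire \<N>2 x2 m s)"
    and final_rel: "R x1 x2 \<Longrightarrow> x1 = final_marking \<longleftrightarrow> x2 = final_marking"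
begin

lemma exec_rel: "R x1 x2 \<Longrightarrow> rel_option R (exec \<N>1 x1 \<sigma>) (exec \<N>2 x2 \<sigma>)"
proof (induction \<sigma> arbitrary: x1 x2)
  case (Cons p \<sigma>)
  obtain m s where p: "p = (m, s)" by fastforce
  show ?case
  proof (cases "enabled \<N>1 x1 m")
    case True
    then show ?thesis
      using Cons.IH[OF fire_rel[OF Cons.prems True]] enabled_rel[OF Cons.prems]
      by (simp add: p exec_Cons_fire outs_eq del: exec.simps(2))
  qed (use enabled_rel[OF Cons.prems] in \<open>simp add: p exec_Cons_fire del: exec.simps(2)\<close>)
qed simp

lemma exec_init_rel: "rel_option R (exec \<N>1 (init_marking A \<N>1) \<sigma>) (exec \<N>2 (init_marking A \<N>2) \<sigma>)"
  using exec_rel[OF init_rel] .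

lemma large_step_eq: "large_step A \<N>2 = large_step A \<N>1"
proof
  fix \<sigma>
  show "large_step A \<N>2 \<sigma> = large_step A \<N>1 \<sigma>"
    using exec_init_rel[of \<sigma>] final_rel unfolding large_step_def
    by (cases "exec \<N>1 (init_marking A \<N>1) \<sigma>"; cases "exec \<N>2 (init_marking A \<N>2) \<sigma>") auto
qed

lemma exec_init_defined_iff:
  "(\<exists>x. exec \<N>2 (init_marking A \<N>2) \<sigma> = Some x) \<longleftrightarrow> (\<exists>x. exec \<N>1 (init_marking A \<N>1) \<sigma> = Some x)"
  using exec_init_rel[of \<sigma>]
  by (cases "exec \<N>1 (init_marking A \<N>1) \<sigma>"; cases "exec \<N>2 (init_marking A \<N>2) \<sigma>") auto

lemma reachable_enabled_iff:
  "(\<exists>x. reachable A \<N>2 x \<and> enabled \<N>2 x m) \<longleftrightarrow> (\<exists>x. reachable A \<N>1 x \<and> enabled \<N>1 x m)"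
proof -
  have "(\<exists>x2. exec \<N>2 (init_marking A \<N>2) \<sigma> = Some x2 \<and> enabled \<N>2 x2 m) \<longleftrightarrow>
        (\<exists>x1. exec \<N>1 (init_marking A \<N>1) \<sigma> = Some x1 \<and> enabled \<N>1 x1 m)" for \<sigma>
    using exec_init_rel[of \<sigma>] enabled_rel
    by (cases "exec \<N>1 (init_marking A \<N>1) \<sigma>"; cases "exec \<N>2 (init_marking A \<N>2) \<sigma>") auto
  then show ?thesis unfolding reachable_def by blast
qed

lemma sound_iff: "sound A \<N>2 \<longleftrightarrow> sound A \<N>1"
  unfolding sound_def atoms_eq reachable_enabled_iff large_step_eq
  using exec_init_defined_iff by blast

end

lemma summary_eq:
  assumes "large_step A \<N>2 = large_step A \<N>1" and "fin \<N>2 = fin \<N>1" and "delta \<N>2 = delta \<N>1"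
  shows "summary A \<N>2 = summary A \<N>1"
proof -
  have "seq_transformer \<N>2 = seq_transformer \<N>1"
    using assms(3) by (simp add: seq_transformer_def[abs_def])
  then show ?thesis using assms(1,2) by (simp add: summary_def[abs_def])
qed

definition remove_arc :: "('a,'q,'n,'r) negotiation \<Rightarrow> 'n \<Rightarrow> 'a \<Rightarrow> 'r \<Rightarrow> 'n \<Rightarrow> ('a,'q,'n,'r) negotiation" where
  "remove_arc \<N> n a r n'' = \<N>\<lparr>arcs := (\<lambda>m c s. if (m, c, s) = (n, a, r)
                                  then arcs \<N> n a r - {n''} else arcs \<N> m c s)\<rparr>"

lemma remove_arc_simps [simp]:
  "atoms (remove_arc \<N> n a r n'') = atoms \<N>" "init (remove_arc \<N> n a r n'') = init \<N>"
  "fin (remove_arc \<N> n a r n'') = fin \<N>" "parties (remove_arc \<N> n a r n'') = parties \<N>"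
  "outs (remove_arc \<N> n a r n'') = outs \<N>" "delta (remove_arc \<N> n a r n'') = delta \<N>"
  "arcs (remove_arc \<N> n a r n'') m c s = (if (m, c, s) = (n, a, r) then arcs \<N> n a r - {n''} else arcs \<N> m c s)"
  by (simp_all add: remove_arc_def)

locale useless_arc =
  fixes \<N> :: "('a,'q,'n,'r) negotiation" and n :: 'n and a b :: 'a and r :: 'r and n' n'' :: 'n
  assumes a_party: "a \<in> parties \<N> n" and b_party: "b \<in> parties \<N> n"
    and targets_distinct: "n' \<noteq> n''"
    and a_party_target: "a \<in> parties \<N> n'" and b_party_useless: "b \<in> parties \<N> n''"
    and useless_arc: "n'' \<in> arcs \<N> n a r" and b_arc: "arcs \<N> n b r = {n'}"
begin

abbreviation \<N>' :: "('a,'q,'n,'r) negotiation" where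
  "\<N>' \<equiv> remove_arc \<N> n a r n''"

lemma agents_distinct: "a \<noteq> b"
  using useless_arc b_arc targets_distinct by auto

definition dead_token_rel :: "('a,'n) marking \<Rightarrow> ('a,'n) marking \<Rightarrow> bool" where
  "dead_token_rel x x' \<longleftrightarrow> x = x' \<or> (x = x'(a := insert n'' (x' a)) \<and> x' b = {n'})"

lemma dead_token_rel_refl: "dead_token_rel x x"
  by (simp add: dead_token_rel_def)

lemma dead_token_rel_other:
  "dead_token_rel x x' \<Longrightarrow> c \<noteq> a \<Longrightarrow> x c = x' c"
  by (auto simp: dead_token_rel_def)

lemma dead_token_relD:
  "dead_token_rel x x' \<Longrightarrow> x \<noteq> x' \<Longrightarrow> x = x'(a := insert n'' (x' a)) \<and> x' b = {n'}"
  by (simp add: dead_token_rel_def)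

lemma enabled_iff:
  assumes "dead_token_rel x x'"
  shows "enabled \<N>' x' m \<longleftrightarrow> enabled \<N> x m"
proof (cases "x = x'")
  case False
  then have x: "x = x'(a := insert n'' (x' a))" and b: "x' b = {n'}"
    using dead_token_relD[OF assms] by blast+
  show ?thesis
  proof (cases "m = n''")
    case True
    then show ?thesis
      using b b_party_useless targets_distinct agents_distinct by (auto simp: x enabled_def)
  qed (auto simp: x enabled_def)
qed (simp add: enabled_def)

lemma fire_dead_token_rel:
  assumes rel: "dead_token_rel x x'" and en: "enabled \<N> x m"
  shows "dead_token_rel (fire \<N> x m s) (fire \<N>' x' m s)"
proof (cases "(m, s) = (n, r)")
  case True
  have "fire \<N> x m s = (fire \<N>' x' m s)(a := insert n'' (fire \<N>' x' m s a))"
  proof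
    fix c
    show "fire \<N> x m s c = ((fire \<N>' x' m s)(a := insert n'' (fire \<N>' x' m s a))) c"
      using True a_party useless_arc dead_token_rel_other[OF rel]
      by (cases "c = a") (auto simp: fire_def insert_absorb)
  qed
  moreover have "fire \<N>' x' m s b = {n'}"
    using True b_party b_arc agents_distinct by (simp add: fire_def)
  ultimately show ?thesis unfolding dead_token_rel_def by blast
next
  case other_step: False
  show ?thesis
  proof (cases "x = x' \<or> a \<in> parties \<N> m")
    case True
    have "fire \<N> x m s = fire \<N>' x' m s"
    proof
      fix c
      show "fire \<N> x m s c = fire \<N>' x' m s c"
        using True other_step dead_token_rel_other[OF rel, of c] by (auto simp: fire_def)
    qed
    then show ?thesis by (simp add: dead_token_rel_refl)
  next
    case a_idle: False
    then have x: "x = x'(a := insert n'' (x' a))" and b: "x' b = {n'}"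
      using dead_token_relD[OF rel] by blast+
    \<comment> \<open>\<open>b\<close> can only fire \<open>n'\<close>, which would involve \<open>a\<close>.\<close>
    have "b \<notin> parties \<N> m"
      using en b a_idle a_party_target agents_distinct by (auto simp: x enabled_def)
    then have "fire \<N> x m s = (fire \<N>' x' m s)(a := insert n'' (fire \<N>' x' m s a))"
      and "fire \<N>' x' m s b = {n'}"
      using a_idle other_step b agents_distinct by (auto simp: x fun_eq_iff fire_def)
    then show ?thesis unfolding dead_token_rel_def by blast
  qed
qed

lemma final_iff:
  assumes "dead_token_rel x x'"
  shows "x = final_marking \<longleftrightarrow> x' = final_marking"
proof (cases "x = x'")
  case False
  then have "x a \<noteq> {}" "x' b \<noteq> {}"
    using dead_token_relD[OF assms] by auto
  then show ?thesis by (auto simp: final_marking_def)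
qed simp

lemma marking_bisimulation: "marking_bisimulation A \<N> \<N>' dead_token_rel"
proof
  show "dead_token_rel (init_marking A \<N>) (init_marking A \<N>')"
    by (simp only: init_marking_def remove_arc_simps dead_token_rel_refl)
qed (simp_all add: enabled_iff fire_dead_token_rel final_iff)

lemma neg_equiv_remove_arc: "neg_equiv A \<N> \<N>'"
proof -
  interpret marking_bisimulation A \<N> \<N>' dead_token_rel
    by (rule marking_bisimulation)
  have "summary A \<N>' = summary A \<N>"
    by (rule summary_eq) (simp_all add: large_step_eq)
  then show ?thesis
    unfolding neg_equiv_def sound_iff by simp
qed

end

theorem theorem3:
  fixes A :: "'a set" and Q :: "'a \<Rightarrow> 'q set"
    and \<N>1 \<N>2 :: "('a,'q,'n,'r) negotiation"
  assumes "is_negotiation A Q \<N>1"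
    and "useless_arc_step \<N>1 \<N>2"
  shows "neg_equiv A \<N>1 \<N>2"
proof -
  obtain n a b r n' n'' where "useless_arc \<N>1 n a b r n' n''" and "\<N>2 = remove_arc \<N>1 n a r n''"
    using assms(2) unfolding useless_arc_step_def remove_arc_def[symmetric] useless_arc_def
    by (elim exE conjE IntE) blast
  then show ?thesis by (simp add: useless_arc.neg_equiv_remove_arc)
qed

end
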